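(* Let $\alpha,\beta$ be words over $X$ such that the word $\alpha\beta$ has no repeated letters and $|\alpha|$ and $|\beta|$ are both even, and let $x$ be any letter occurring in $\beta$. Then $$f[\alpha]\,f[\alpha\beta]=\sum_{y} s(\beta,xy)\,f[\alpha xy]\,f[(\alpha\beta)\setminus xy],$$ where the sum runs over all $y\in X$; only the letters $y\neq x$ of $\beta$ give nonzero terms.
   Context: Setting. Let $X$ be a set and $R$ a commutative ring. Let $f$ assign to each ordered pair $(x,y)\in X\times X$ an element $f[xy]\in R$, subject to $f[xy]=-f[yx]$ and $f[xx]=0$ for all $x,y\in X$. Words. A word is a finite sequence of elements (letters) of $X$. Concatenation is written by juxtaposition, $\epsilon$ is the empty word, and $|\alpha|$ is the length of $\alpha$. For words $\alpha,\beta$, the word $\alpha\setminus\beta$ is obtained from $\alpha$ by deleting every letter that occurs in $\beta$. For example, $(\alpha\beta)\setminus xy$ means $\alpha\beta$ with the letters $x$ and $y$ deleted. Sign. For words $\alpha,\beta$, set $s(\alpha,\beta)=0$ if $\alpha$ or $\beta$ has a repeated letter, or if $\beta$ contains a letter not in $\alpha$. Otherwise $s(\alpha,\beta)\in\{\pm1\}$ is the sign of the permutation that rearranges $\alpha$ into the word $\beta(\alpha\setminus\beta)$. Pfaffian. Let $\alpha=x_1\ldots x_{2n}$ be a word with distinct letters. Then $$f[\alpha]=\sum s(\alpha,y_1\ldots y_{2n})\,f[y_1y_2]\cdots f[y_{2n-1}y_{2n}],$$ where the sum is over the $(2n-1)(2n-3)\cdots1$ partitions of $\{x_1,\ldots,x_{2n}\}$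 into pairs $\{y_1,y_2\},\ldots,\{y_{2n-1},y_{2n}\}$. Each term does not depend on the order in which the pairs or their elements are listed. Further conventions: $f[\epsilon]=1$; $f[\alpha]=0$ if $\alpha$ has a repeated letter; and $f[\alpha]=0$ if $|\alpha|$ is odd. For a two-letter word this agrees with the given value $f[xy]$. *)

theory Defs
  imports "HOL-Combinatorics.Permutations"
begin

definition del_letters :: "'a list \<Rightarrow> 'a list \<Rightarrow> 'a list" where
  "del_letters \<alpha> \<beta> = filter (\<lambda>z. z \<notin> set \<beta>) \<alpha>"

definition word_sign :: "'a list \<Rightarrow> 'a list \<Rightarrow> 'r::comm_ring_1" where
  "word_sign \<alpha> \<beta> =
     (if distinct \<alpha> \<and> distinct \<beta> \<and> set \<beta> \<subseteq> set \<alpha> then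
        (let \<gamma> = \<beta> @ del_letters \<alpha> \<beta>;
             p = (THE p. p permutes {..<length \<alpha>} \<and>
                         (\<forall>i<length \<alpha>. \<gamma> ! i = \<alpha> ! p i))
         in of_int (sign p))
      else 0)"

definition pair_partitions :: "'a set \<Rightarrow> 'a set set set" where
  "pair_partitions A = {M. (\<forall>P\<in>M. P \<subseteq> A \<and> card P = 2) \<and>
                           (\<forall>P\<in>M. \<forall>Q\<in>M. P \<noteq> Q \<longrightarrow> P \<inter> Q = {}) \<and> \<Union>M = A}"

definition lists_pairing :: "'a set set \<Rightarrow> 'a list \<Rightarrow> bool" where
  "lists_pairing M ys \<longleftrightarrow> distinct ys \<and> even (length ys) \<and>
     M = {{ys ! (2*i), ys ! (2*i+1)} | i. i < length ys div 2}"

text \<open>Pfaffian f[alpha]. Each term is independent of the listing chosen.\<close>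
definition pf :: "('a \<Rightarrow> 'a \<Rightarrow> 'r::comm_ring_1) \<Rightarrow> 'a list \<Rightarrow> 'r" where
  "pf f \<alpha> =
     (if distinct \<alpha> \<and> even (length \<alpha>) then
        (\<Sum>M\<in>pair_partitions (set \<alpha>).
           (let ys = (SOME ys. lists_pairing M ys)
            in word_sign \<alpha> ys * (\<Prod>i<length ys div 2. f (ys ! (2*i)) (ys ! (2*i+1)))))
      else 0)"

end

theory Submission
  imports Defs
begin

text \<open>
  Both sides are evaluated with the expansion of the Pfaffian along its first letter,
  f[x\<gamma>] = \<Sum>y (-1)^pos(y) f[xy] f[\<gamma>\y], where pos(y) is the position of y in \<gamma>
  counted from 0. It agrees with the sum over pair partitions because, for antisymmetric f,
  the term of a partition does not depend on how its pairs are listed. For the expansion two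
  identities are proved together by induction on |\<alpha>| + |\<beta>|: for even |\<alpha>|,
  f[\<alpha>] f[x\<alpha>\<beta>] = \<Sum>y\<in>\<beta> (-1)^pos(y) f[xy\<alpha>] f[\<alpha>(\<beta>\y)],
  and for odd |\<alpha>| the sum \<Sum>y\<in>\<beta> (-1)^pos(y) f[y\<alpha>] f[\<alpha>(\<beta>\y)] vanishes.
  Expanding along x, respectively along the first letter of \<beta>, reduces each identity to
  instances of the other on shorter words. The theorem is the first identity after moving x
  to the front of \<beta>.
\<close>

section \<open>Positions and alternating functions of words\<close>

fun pos :: "'a list \<Rightarrow> 'a \<Rightarrow> nat" where
  "pos [] y = 0"
| "pos (a # xs) y = (if a = y then 0 else Suc (pos xs y))"

lemma pos_append: "pos (xs @ ys) y = (if y \<in> set xs then pos xs y else length xs + pos ys y)"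
  by (induction xs) auto

lemma pos_less_length: "y \<in> set xs \<Longrightarrow> pos xs y < length xs"
  by (induction xs) auto

lemma nth_pos: "y \<in> set xs \<Longrightarrow> xs ! pos xs y = y"
  by (induction xs) auto

lemma pos_nth: "distinct xs \<Longrightarrow> i < length xs \<Longrightarrow> pos xs (xs ! i) = i"
proof (induction xs arbitrary: i)
  case (Cons a xs)
  then show ?case by (cases i) auto
qed simp

lemma pos_remove1:
  assumes "distinct xs" "y \<in> set xs" "u \<in> set xs" "u \<noteq> y"
  shows "pos (remove1 y xs) u = (if pos xs y < pos xs u then pos xs u - 1 else pos xs u)"
  using assms
proof (induction xs)
  case (Cons a xs)
  show ?case
  proof (cases "a = y \<or> a = u")
    case False
    then have "y \<in> set xs" "u \<in> set xs" using Cons.prems by auto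
    moreover have "0 < pos xs u" if "pos xs y < pos xs u" using that by auto
    ultimately show ?thesis using Cons.IH Cons.prems False by auto
  qed (use Cons.prems in auto)
qed simp

text \<open>The exponent counts the transpositions that bring y and then u to the front of xs.\<close>
lemma minus_one_power_pos_remove1_swap:
  assumes "distinct xs" "y \<in> set xs" "u \<in> set xs" "u \<noteq> y"
  shows "(-1::'r::comm_ring_1) ^ (pos xs y + pos (remove1 y xs) u)
       = - ((-1) ^ (pos xs u + pos (remove1 u xs) y))"
proof -
  have "pos xs y \<noteq> pos xs u" using assms nth_pos by metis
  then consider "pos xs y < pos xs u" | "pos xs u < pos xs y" by linarith
  then show ?thesis
  proof cases
    case 1
    then have "pos xs u + pos (remove1 u xs) y = Suc (pos xs y + pos (remove1 y xs) u)"
      using pos_remove1[OF assms] pos_remove1[OF assms(1,3,2)] assms(4) by auto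
    then show ?thesis by simp
  next
    case 2
    then have "pos xs y + pos (remove1 y xs) u = Suc (pos xs u + pos (remove1 u xs) y)"
      using pos_remove1[OF assms] pos_remove1[OF assms(1,3,2)] assms(4) by auto
    then show ?thesis by simp
  qed
qed

lemma sum_offdiag_swap:
  assumes "finite A"
  shows "(\<Sum>y\<in>A. \<Sum>u\<in>A - {y}. g y u) = (\<Sum>u\<in>A. \<Sum>y\<in>A - {u}. g y u)"
  using sum.swap_restrict[OF assms assms, of g "\<lambda>y u. u \<noteq> y"]
  by (simp add: set_diff_eq conj_commute eq_commute)

lemma sum_pos_pairs_swap:
  assumes "distinct \<beta>"
  shows "(\<Sum>y\<in>set \<beta>. \<Sum>u\<in>set \<beta> - {y}. (-1) ^ (pos \<beta> y + pos (remove1 y \<beta>) u) * g y u)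
       = - (\<Sum>y\<in>set \<beta>. \<Sum>u\<in>set \<beta> - {y}. ((-1::'r::comm_ring_1) ^ (pos \<beta> y + pos (remove1 y \<beta>) u)) * g u y)"
proof -
  have "(\<Sum>y\<in>set \<beta>. \<Sum>u\<in>set \<beta> - {y}. (-1) ^ (pos \<beta> y + pos (remove1 y \<beta>) u) * g y u)
      = (\<Sum>u\<in>set \<beta>. \<Sum>y\<in>set \<beta> - {u}. ((-1::'r) ^ (pos \<beta> y + pos (remove1 y \<beta>) u)) * g y u)"
    by (rule sum_offdiag_swap) simp
  also have "\<dots> = (\<Sum>u\<in>set \<beta>. \<Sum>y\<in>set \<beta> - {u}. - ((-1) ^ (pos \<beta> u + pos (remove1 u \<beta>) y) * g y u))"
  proof (intro sum.cong refl)
    fix u y assume "u \<in> set \<beta>" "y \<in> set \<beta> - {u}"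
    then show "(-1) ^ (pos \<beta> y + pos (remove1 y \<beta>) u) * g y u
        = - ((-1) ^ (pos \<beta> u + pos (remove1 u \<beta>) y) * g y u)"
      using minus_one_power_pos_remove1_swap[OF assms, of y u, where 'r='r] by auto
  qed
  finally show ?thesis by (simp add: sum_negf)
qed

definition alternating :: "('a list \<Rightarrow> 'r::comm_ring_1) \<Rightarrow> bool" where
  "alternating F \<longleftrightarrow> (\<forall>\<xi> u v \<eta>. F (\<xi> @ v # u # \<eta>) = - F (\<xi> @ u # v # \<eta>))"

lemma alternatingD: "alternating F \<Longrightarrow> F (\<xi> @ v # u # \<eta>) = - F (\<xi> @ u # v # \<eta>)"
  unfolding alternating_def by blast

lemma alternating_move_to_front:
  assumes "alternating F"
  shows "y \<in> set \<gamma> \<Longrightarrow> F (\<xi> @ y # remove1 y \<gamma>) = (-1) ^ pos \<gamma> y * F (\<xi> @ \<gamma>)"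
proof (induction \<gamma> arbitrary: \<xi>)
  case (Cons a \<gamma>)
  show ?case
  proof (cases "a = y")
    case False
    then have y: "y \<in> set \<gamma>" using Cons.prems by auto
    have "F (\<xi> @ y # remove1 y (a # \<gamma>)) = F (\<xi> @ y # a # remove1 y \<gamma>)" using False by simp
    also have "\<dots> = - F ((\<xi> @ [a]) @ y # remove1 y \<gamma>)"
      using alternatingD[OF assms, of \<xi> y a "remove1 y \<gamma>"] by simp
    also have "\<dots> = - ((-1) ^ pos \<gamma> y * F (\<xi> @ a # \<gamma>))" using Cons.IH[OF y, of "\<xi> @ [a]"] by simp
    finally show ?thesis using False by simp
  qed simp
qed simp

lemma minus_one_power_cancel: "(-1::'r::comm_ring_1) ^ k * ((-1) ^ k * x) = x"
  by (simp add: mult.assoc[symmetric] power_mult_distrib[symmetric])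

fun reorder_sign :: "'a list \<Rightarrow> 'a list \<Rightarrow> int" where
  "reorder_sign [] \<gamma> = 1"
| "reorder_sign (a # \<alpha>) \<gamma> = (-1) ^ pos \<gamma> a * reorder_sign \<alpha> (remove1 a \<gamma>)"

lemma alternating_reorder:
  assumes "alternating F"
  shows "mset \<gamma> = mset \<alpha> \<Longrightarrow> F (\<xi> @ \<gamma>) = of_int (reorder_sign \<alpha> \<gamma>) * F (\<xi> @ \<alpha>)"
proof (induction \<alpha> arbitrary: \<xi> \<gamma>)
  case (Cons a \<alpha>)
  have a: "a \<in> set \<gamma>" using Cons.prems by (metis list.set_intros(1) set_mset_mset)
  have "F (\<xi> @ \<gamma>) = (-1) ^ pos \<gamma> a * ((-1) ^ pos \<gamma> a * F (\<xi> @ \<gamma>))"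
    by (rule minus_one_power_cancel[symmetric])
  also have "\<dots> = (-1) ^ pos \<gamma> a * F ((\<xi> @ [a]) @ remove1 a \<gamma>)"
    using alternating_move_to_front[OF assms a] by simp
  also have "F ((\<xi> @ [a]) @ remove1 a \<gamma>) = of_int (reorder_sign \<alpha> (remove1 a \<gamma>)) * F ((\<xi> @ [a]) @ \<alpha>)"
    using Cons.prems by (intro Cons.IH) simp
  finally show ?case by simp
qed simp

lemma alternating_reorder_cross:
  assumes "alternating F" "alternating G" "mset zs = mset \<gamma>"
  shows "F (\<xi> @ zs) * G (\<eta> @ \<gamma>) = F (\<xi> @ \<gamma>) * G (\<eta> @ zs)"
  using alternating_reorder[OF assms(1,3)] alternating_reorder[OF assms(2,3)] by (simp add: mult_ac)

section \<open>Signs of rearrangements\<close>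

definition position_perm :: "'a list \<Rightarrow> 'a list \<Rightarrow> nat \<Rightarrow> nat" where
  "position_perm \<alpha> \<gamma> = (\<lambda>i. if i < length \<alpha> then pos \<alpha> (\<gamma> ! i) else i)"

lemma position_perm_permutes:
  assumes "distinct \<alpha>" "distinct \<gamma>" "set \<gamma> = set \<alpha>"
  shows "position_perm \<alpha> \<gamma> permutes {..<length \<alpha>}"
proof (rule bij_imp_permutes)
  have len: "length \<gamma> = length \<alpha>" using assms distinct_card by metis
  let ?p = "position_perm \<alpha> \<gamma>"
  have inj: "inj_on ?p {..<length \<alpha>}"
  proof (rule inj_onI)
    fix i j assume i: "i \<in> {..<length \<alpha>}" and j: "j \<in> {..<length \<alpha>}" and "?p i = ?p j"
    then have "pos \<alpha> (\<gamma> ! i) = pos \<alpha> (\<gamma> ! j)" by (simp add: position_perm_def)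
    moreover have "\<gamma> ! i \<in> set \<alpha>" "\<gamma> ! j \<in> set \<alpha>" using i j len assms(3) nth_mem by force+
    ultimately have "\<gamma> ! i = \<gamma> ! j" using nth_pos by metis
    then show "i = j" using assms(2) i j len by (simp add: nth_eq_iff_index_eq)
  qed
  have "?p ` {..<length \<alpha>} \<subseteq> {..<length \<alpha>}"
  proof (rule image_subsetI)
    fix i assume "i \<in> {..<length \<alpha>}"
    moreover have "\<gamma> ! i \<in> set \<alpha>" using calculation len assms(3) nth_mem by force
    ultimately show "?p i \<in> {..<length \<alpha>}" by (simp add: position_perm_def pos_less_length)
  qed
  then have "?p ` {..<length \<alpha>} = {..<length \<alpha>}"
    by (intro endo_inj_surj[OF _ _ inj]) simp
  then show "bij_betw ?p {..<length \<alpha>} {..<length \<alpha>}" using inj by (simp add: bij_betw_def)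
  show "\<And>x. x \<notin> {..<length \<alpha>} \<Longrightarrow> ?p x = x" by (simp add: position_perm_def)
qed

lemma word_sign_eq_sign_position_perm:
  assumes "distinct \<alpha>" "distinct \<gamma>" "set \<gamma> = set \<alpha>"
  shows "word_sign \<alpha> \<gamma> = of_int (sign (position_perm \<alpha> \<gamma>))"
proof -
  have len: "length \<gamma> = length \<alpha>" using assms distinct_card by metis
  let ?P = "\<lambda>p. p permutes {..<length \<alpha>} \<and> (\<forall>i<length \<alpha>. \<gamma> ! i = \<alpha> ! p i)"
  have "\<gamma> ! i = \<alpha> ! position_perm \<alpha> \<gamma> i" if "i < length \<alpha>" for i
    using that len assms(3) nth_mem[of i \<gamma>] by (simp add: position_perm_def nth_pos)
  then have P: "?P (position_perm \<alpha> \<gamma>)" using position_perm_permutes[OF assms] by blast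
  have unique: "p = position_perm \<alpha> \<gamma>" if "?P p" for p
  proof
    fix i show "p i = position_perm \<alpha> \<gamma> i"
    proof (cases "i < length \<alpha>")
      case True
      then have "p i < length \<alpha>" using that permutes_in_image by fastforce
      then show ?thesis using that True assms(1) by (simp add: position_perm_def pos_nth)
    qed (use that in \<open>simp add: position_perm_def permutes_def\<close>)
  qed
  have del: "del_letters \<alpha> \<gamma> = []" using assms(3) by (simp add: del_letters_def)
  have "(THE p. ?P p) = position_perm \<alpha> \<gamma>" using P unique by (rule the_equality)
  then show ?thesis using assms del by (simp add: word_sign_def)
qed

lemma position_perm_swap:
  assumes "length (\<xi> @ u # v # \<eta>) = length \<alpha>"
  shows "position_perm \<alpha> (\<xi> @ v # u # \<eta>)
       = position_perm \<alpha> (\<xi> @ u # v # \<eta>) \<circ> transpose (length \<xi>) (Suc (length \<xi>))"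
proof
  fix i
  let ?k = "length \<xi>"
  show "position_perm \<alpha> (\<xi> @ v # u # \<eta>) i = (position_perm \<alpha> (\<xi> @ u # v # \<eta>) \<circ> transpose ?k (Suc ?k)) i"
  proof (cases "i < length \<alpha>")
    case True
    have "(\<xi> @ v # u # \<eta>) ! i = (\<xi> @ u # v # \<eta>) ! (transpose ?k (Suc ?k) i)"
      by (auto simp: transpose_def nth_append nth_Cons split: nat.splits)
    moreover have "transpose ?k (Suc ?k) i < length \<alpha>" using True assms by (auto simp: transpose_def)
    ultimately show ?thesis using True by (simp add: position_perm_def)
  next
    case False
    then have "transpose ?k (Suc ?k) i = i" using assms by (auto simp: transpose_def)
    then show ?thesis using False by (simp add: position_perm_def)
  qed
qed

text \<open>Cutting word_sign off outside the rearrangements of \<alpha> makes it alternating without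
  having to track the padding by del_letters.\<close>
definition arrangement_sign :: "'a list \<Rightarrow> 'a list \<Rightarrow> 'r::comm_ring_1" where
  "arrangement_sign \<alpha> \<gamma> = (if distinct \<gamma> \<and> set \<gamma> = set \<alpha> then word_sign \<alpha> \<gamma> else 0)"

lemma alternating_arrangement_sign:
  assumes "distinct \<alpha>"
  shows "alternating (arrangement_sign \<alpha> :: 'a list \<Rightarrow> 'r::comm_ring_1)"
  unfolding alternating_def
proof (intro allI)
  fix \<xi> \<eta> :: "'a list" and u v :: 'a
  let ?uv = "\<xi> @ u # v # \<eta>" and ?vu = "\<xi> @ v # u # \<eta>"
  show "arrangement_sign \<alpha> ?vu = - (arrangement_sign \<alpha> ?uv :: 'r)"
  proof (cases "distinct ?uv \<and> set ?uv = set \<alpha>")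
    case True
    have len: "length ?uv = length \<alpha>" using True assms distinct_card by metis
    have "permutation (position_perm \<alpha> ?uv)"
      using position_perm_permutes[OF assms] True permutes_imp_permutation by blast
    moreover have "permutation (transpose (length \<xi>) (Suc (length \<xi>)))"
      using len by (intro permutes_imp_permutation[of "{..<length \<alpha>}"] permutes_swap_id) auto
    ultimately have "sign (position_perm \<alpha> ?vu) = - sign (position_perm \<alpha> ?uv)"
      by (simp add: position_perm_swap[OF len] sign_compose sign_swap_id)
    then have "(of_int (sign (position_perm \<alpha> ?vu)) :: 'r) = - of_int (sign (position_perm \<alpha> ?uv))"
      by simp
    moreover have "word_sign \<alpha> ?vu = (of_int (sign (position_perm \<alpha> ?vu)) :: 'r)"
      using True assms by (intro word_sign_eq_sign_position_perm) auto
    moreover have "word_sign \<alpha> ?uv = (of_int (sign (position_perm \<alpha> ?uv)) :: 'r)"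
      using True assms by (intro word_sign_eq_sign_position_perm) auto
    moreover have vu: "distinct ?vu \<and> set ?vu = set \<alpha>" using True by auto
    ultimately show ?thesis unfolding arrangement_sign_def if_P[OF True] if_P[OF vu] by (simp only:)
  next
    case False
    moreover have "\<not> (distinct ?vu \<and> set ?vu = set \<alpha>)" using False by auto
    ultimately show ?thesis unfolding arrangement_sign_def by (simp only: if_False minus_zero)
  qed
qed

lemma arrangement_sign_self: "distinct \<alpha> \<Longrightarrow> (arrangement_sign \<alpha> \<alpha> :: 'r::comm_ring_1) = 1"
proof -
  assume "distinct \<alpha>"
  moreover have "position_perm \<alpha> \<alpha> = id"
    using \<open>distinct \<alpha>\<close> by (auto simp: position_perm_def pos_nth fun_eq_iff)
  ultimately show ?thesis by (simp add: arrangement_sign_def word_sign_eq_sign_position_perm)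
qed

lemma word_sign_eq_arrangement_sign:
  assumes "distinct \<alpha>" "distinct \<beta>" "set \<beta> \<subseteq> set \<alpha>"
  shows "word_sign \<alpha> \<beta> = arrangement_sign \<alpha> (\<beta> @ del_letters \<alpha> \<beta>)"
proof -
  have "distinct (\<beta> @ del_letters \<alpha> \<beta>)" "set (\<beta> @ del_letters \<alpha> \<beta>) = set \<alpha>"
    using assms by (auto simp: del_letters_def)
  moreover have "del_letters \<alpha> (\<beta> @ del_letters \<alpha> \<beta>) = []"
    by (auto simp: del_letters_def filter_empty_conv)
  ultimately show ?thesis using assms by (simp add: word_sign_def arrangement_sign_def Let_def)
qed

lemma del_letters_pair:
  assumes "x \<notin> set \<alpha>" "y \<notin> set \<alpha>" "distinct \<beta>"
  shows "del_letters (\<alpha> @ \<beta>) [x, y] = \<alpha> @ remove1 y (remove1 x \<beta>)"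
proof -
  have "remove1 y (remove1 x \<beta>) = removeAll y (removeAll x \<beta>)"
    using assms(3) by (metis distinct_remove1 distinct_remove1_removeAll)
  also have "\<dots> = filter (\<lambda>z. z \<notin> set [x, y]) \<beta>"
    by (auto simp: removeAll_filter_not_eq intro: filter_cong)
  finally show ?thesis using assms(1,2) by (auto simp: del_letters_def filter_id_conv)
qed

lemma word_sign_pair:
  assumes "distinct \<beta>" "x \<in> set \<beta>" "y \<in> set (remove1 x \<beta>)"
  shows "word_sign \<beta> [x, y] = ((-1) ^ (pos \<beta> x + pos (remove1 x \<beta>) y) :: 'r::comm_ring_1)"
proof -
  have alt: "alternating (arrangement_sign \<beta> :: 'a list \<Rightarrow> 'r)"
    by (rule alternating_arrangement_sign[OF assms(1)])
  have "x \<noteq> y" "y \<in> set \<beta>" using assms by (auto dest: in_set_remove1)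
  then have "word_sign \<beta> [x, y] = (arrangement_sign \<beta> ([x] @ y # remove1 y (remove1 x \<beta>)) :: 'r)"
    using assms word_sign_eq_arrangement_sign[of \<beta> "[x, y]"] del_letters_pair[of x "[]" y \<beta>] by simp
  also have "\<dots> = (-1) ^ pos (remove1 x \<beta>) y * arrangement_sign \<beta> ([] @ x # remove1 x \<beta>)"
    using alternating_move_to_front[OF alt assms(3), where \<xi>="[x]"] by simp
  also have "arrangement_sign \<beta> ([] @ x # remove1 x \<beta>) = (-1) ^ pos \<beta> x * (arrangement_sign \<beta> ([] @ \<beta>) :: 'r)"
    by (rule alternating_move_to_front[OF alt assms(2)])
  finally show ?thesis using arrangement_sign_self[OF assms(1), where 'r='r] by (simp add: power_add)
qed

section \<open>Expansion along the first letter\<close>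

function pf_row :: "('a \<Rightarrow> 'a \<Rightarrow> 'r::comm_ring_1) \<Rightarrow> 'a list \<Rightarrow> 'r" where
  "pf_row f [] = 1"
| "pf_row f (a # \<gamma>) = (\<Sum>y\<in>set \<gamma>. (-1) ^ pos \<gamma> y * f a y * pf_row f (remove1 y \<gamma>))"
  by pat_completeness auto
termination
  by (relation "measure (length \<circ> snd)") (simp_all add: length_remove1)

declare pf_row.simps(2) [simp del]

lemma pf_row_Cons_Cons:
  assumes "v \<notin> set \<eta>"
  shows "pf_row f (u # v # \<eta>)
       = f u v * pf_row f \<eta> - (\<Sum>y\<in>set \<eta>. (-1) ^ pos \<eta> y * f u y * pf_row f (v # remove1 y \<eta>))"
proof -
  have "pf_row f (u # v # \<eta>) = f u v * pf_row f \<eta> +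
      (\<Sum>y\<in>set \<eta>. (-1) ^ pos (v # \<eta>) y * f u y * pf_row f (remove1 y (v # \<eta>)))"
    using assms by (simp add: pf_row.simps(2) sum.insert)
  also have "(\<Sum>y\<in>set \<eta>. (-1) ^ pos (v # \<eta>) y * f u y * pf_row f (remove1 y (v # \<eta>)))
      = (\<Sum>y\<in>set \<eta>. - ((-1) ^ pos \<eta> y * f u y * pf_row f (v # remove1 y \<eta>)))"
    using assms by (intro sum.cong) auto
  finally show ?thesis by (simp add: sum_negf)
qed

lemma pf_row_Cons_Cons_expand:
  assumes "distinct (u # v # \<eta>)"
  shows "pf_row f (u # v # \<eta>) = f u v * pf_row f \<eta> -
    (\<Sum>y\<in>set \<eta>. \<Sum>w\<in>set \<eta> - {y}. (-1) ^ (pos \<eta> y + pos (remove1 y \<eta>) w) *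
        (f u y * f v w * pf_row f (remove1 w (remove1 y \<eta>))))"
proof -
  have v: "v \<notin> set \<eta>" using assms by simp
  show ?thesis
    unfolding pf_row_Cons_Cons[OF v] using assms
    by (simp add: pf_row.simps(2) set_remove1_eq sum_distrib_left power_add mult_ac)
qed

lemma pf_row_Cons_append:
  assumes "distinct (x # \<alpha> @ \<beta>)"
  shows "pf_row f (x # \<alpha> @ \<beta>) =
    (\<Sum>z\<in>set \<alpha>. (-1) ^ pos \<alpha> z * f x z * pf_row f (remove1 z \<alpha> @ \<beta>)) +
    (\<Sum>z\<in>set \<beta>. (-1) ^ (length \<alpha> + pos \<beta> z) * f x z * pf_row f (\<alpha> @ remove1 z \<beta>))"
proof -
  have disj: "set \<alpha> \<inter> set \<beta> = {}" using assms by auto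
  have "pf_row f (x # \<alpha> @ \<beta>) =
      (\<Sum>z\<in>set \<alpha>. (-1) ^ pos (\<alpha> @ \<beta>) z * f x z * pf_row f (remove1 z (\<alpha> @ \<beta>))) +
      (\<Sum>z\<in>set \<beta>. (-1) ^ pos (\<alpha> @ \<beta>) z * f x z * pf_row f (remove1 z (\<alpha> @ \<beta>)))"
    unfolding pf_row.simps(2) set_append by (rule sum.union_disjoint) (use disj in auto)
  also have "(\<Sum>z\<in>set \<alpha>. (-1) ^ pos (\<alpha> @ \<beta>) z * f x z * pf_row f (remove1 z (\<alpha> @ \<beta>))) =
      (\<Sum>z\<in>set \<alpha>. (-1) ^ pos \<alpha> z * f x z * pf_row f (remove1 z \<alpha> @ \<beta>))"
    by (intro sum.cong) (auto simp: pos_append remove1_append)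
  also have "(\<Sum>z\<in>set \<beta>. (-1) ^ pos (\<alpha> @ \<beta>) z * f x z * pf_row f (remove1 z (\<alpha> @ \<beta>))) =
      (\<Sum>z\<in>set \<beta>. (-1) ^ (length \<alpha> + pos \<beta> z) * f x z * pf_row f (\<alpha> @ remove1 z \<beta>))"
    using disj by (intro sum.cong) (auto simp: pos_append remove1_append)
  finally show ?thesis .
qed

lemma pf_row_swap_first:
  fixes f :: "'a \<Rightarrow> 'a \<Rightarrow> 'r::comm_ring_1"
  assumes antisym: "\<And>u v. f u v = - f v u" and "distinct (u # v # \<eta>)"
  shows "pf_row f (v # u # \<eta>) = - pf_row f (u # v # \<eta>)"
proof -
  define Q where "Q u v = (\<Sum>y\<in>set \<eta>. \<Sum>w\<in>set \<eta> - {y}. (-1::'r) ^ (pos \<eta> y + pos (remove1 y \<eta>) w) *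
        (f u y * f v w * pf_row f (remove1 w (remove1 y \<eta>))))" for u v
  have swap: "Q v u = - Q u v"
    unfolding Q_def using assms(2)
    by (subst sum_pos_pairs_swap) (auto simp: remove1_commute mult_ac)
  have uv: "pf_row f (u # v # \<eta>) = f u v * pf_row f \<eta> - Q u v"
    unfolding Q_def by (rule pf_row_Cons_Cons_expand[OF assms(2)])
  have "distinct (v # u # \<eta>)" using assms(2) by auto
  then have vu: "pf_row f (v # u # \<eta>) = f v u * pf_row f \<eta> - Q v u"
    unfolding Q_def by (rule pf_row_Cons_Cons_expand)
  show ?thesis unfolding uv vu swap antisym[of v u] by (simp add: algebra_simps)
qed

lemma pf_row_swap:
  fixes f :: "'a \<Rightarrow> 'a \<Rightarrow> 'r::comm_ring_1"
  assumes antisym: "\<And>u v. f u v = - f v u"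
  shows "distinct (\<xi> @ u # v # \<eta>) \<Longrightarrow> pf_row f (\<xi> @ v # u # \<eta>) = - pf_row f (\<xi> @ u # v # \<eta>)"
proof (induction "length \<xi>" arbitrary: \<xi> \<eta> rule: less_induct)
  case less
  show ?case
  proof (cases \<xi>)
    case Nil
    then show ?thesis using pf_row_swap_first[OF antisym] less.prems by simp
  next
    case (Cons a \<xi>')
    let ?uv = "\<xi>' @ u # v # \<eta>" and ?vu = "\<xi>' @ v # u # \<eta>"
    have d: "distinct ?uv" "a \<notin> set ?uv" using less.prems Cons by auto
    have "(-1) ^ pos ?vu y * pf_row f (remove1 y ?vu) = - ((-1) ^ pos ?uv y * pf_row f (remove1 y ?uv))"
      if y: "y \<in> set ?uv" for y
    proof -
      consider "y \<in> set \<xi>'" | "y = u" | "y = v" | "y \<in> set \<eta>" "y \<notin> set \<xi>'" "y \<noteq> u" "y \<noteq> v"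
        using y by auto
      then show ?thesis
      proof cases
        case 1
        have "pf_row f (remove1 y \<xi>' @ v # u # \<eta>) = - pf_row f (remove1 y \<xi>' @ u # v # \<eta>)"
          using d 1 Cons by (intro less.hyps) (auto simp: length_remove1 distinct_remove1)
        then show ?thesis using 1 by (simp add: pos_append remove1_append)
      next
        case 4
        have "pf_row f (\<xi>' @ v # u # remove1 y \<eta>) = - pf_row f (\<xi>' @ u # v # remove1 y \<eta>)"
          using d Cons by (intro less.hyps) (auto simp: distinct_remove1)
        then show ?thesis using 4 by (simp add: pos_append remove1_append)
      qed (use d in \<open>auto simp: pos_append remove1_append\<close>)
    qed
    then have "pf_row f (a # ?vu) = (\<Sum>y\<in>set ?uv. - ((-1) ^ pos ?uv y * f a y * pf_row f (remove1 y ?uv)))"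
      unfolding pf_row.simps(2) by (intro sum.cong) (auto simp: mult_ac)
    then show ?thesis using Cons by (simp add: pf_row.simps(2) sum_negf)
  qed
qed

lemma alternating_pf_row:
  fixes f :: "'a \<Rightarrow> 'a \<Rightarrow> 'r::comm_ring_1"
  assumes antisym: "\<And>u v. f u v = - f v u"
  shows "alternating (\<lambda>\<gamma>. if distinct \<gamma> then pf_row f \<gamma> else 0)"
  unfolding alternating_def
proof (intro allI)
  fix \<xi> \<eta> :: "'a list" and u v :: 'a
  have "distinct (\<xi> @ v # u # \<eta>) \<longleftrightarrow> distinct (\<xi> @ u # v # \<eta>)" by auto
  then show "(if distinct (\<xi> @ v # u # \<eta>) then pf_row f (\<xi> @ v # u # \<eta>) else 0)
      = - (if distinct (\<xi> @ u # v # \<eta>) then pf_row f (\<xi> @ u # v # \<eta>) else 0)"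
    using pf_row_swap[OF antisym, of \<xi> u v \<eta>] by simp
qed

lemma pf_row_move_to_front:
  fixes f :: "'a \<Rightarrow> 'a \<Rightarrow> 'r::comm_ring_1"
  assumes antisym: "\<And>u v. f u v = - f v u" and "distinct (\<xi> @ \<alpha> @ \<beta>)" "z \<in> set \<alpha>"
  shows "pf_row f (\<xi> @ z # remove1 z \<alpha> @ \<beta>) = (-1) ^ pos \<alpha> z * pf_row f (\<xi> @ \<alpha> @ \<beta>)"
proof -
  have z: "z \<in> set (\<alpha> @ \<beta>)" using assms(3) by simp
  have m: "mset (\<xi> @ z # remove1 z \<alpha> @ \<beta>) = mset (\<xi> @ \<alpha> @ \<beta>)"
    using assms(3) by (simp add: insert_DiffM)
  have "distinct (\<xi> @ z # remove1 z \<alpha> @ \<beta>)"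
    by (rule iffD2[OF mset_eq_imp_distinct_iff[OF m] assms(2)])
  moreover have "remove1 z (\<alpha> @ \<beta>) = remove1 z \<alpha> @ \<beta>" "pos (\<alpha> @ \<beta>) z = pos \<alpha> z"
    using assms(3) by (simp_all add: remove1_append pos_append)
  ultimately show ?thesis
    using alternating_move_to_front[OF alternating_pf_row[OF antisym] z, of \<xi>] assms(2) by simp
qed

lemma pf_row_move_across:
  fixes f :: "'a \<Rightarrow> 'a \<Rightarrow> 'r::comm_ring_1"
  assumes antisym: "\<And>u v. f u v = - f v u" and "distinct (\<alpha> @ z # \<delta>)"
  shows "pf_row f (\<alpha> @ z # \<delta>) = (-1) ^ length \<alpha> * pf_row f (z # \<alpha> @ \<delta>)"
proof -
  have "pf_row f ([] @ z # remove1 z (\<alpha> @ [z]) @ \<delta>) = (-1) ^ pos (\<alpha> @ [z]) z * pf_row f ([] @ (\<alpha> @ [z]) @ \<delta>)"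
    using assms(2) by (intro pf_row_move_to_front[OF antisym]) auto
  then have "pf_row f (z # \<alpha> @ \<delta>) = (-1) ^ length \<alpha> * pf_row f (\<alpha> @ z # \<delta>)"
    using assms(2) by (simp add: remove1_append pos_append)
  then show ?thesis by (simp add: minus_one_power_cancel)
qed

lemma pf_row_append_pair:
  fixes f :: "'a \<Rightarrow> 'a \<Rightarrow> 'r::comm_ring_1"
  assumes antisym: "\<And>u v. f u v = - f v u"
    and d: "distinct (\<alpha> @ [x, y])" and ev: "even (length \<alpha>)"
  shows "pf_row f (\<alpha> @ [x, y]) = pf_row f (x # y # \<alpha>)"
proof -
  have "pf_row f (\<alpha> @ x # [y]) = pf_row f ((x # \<alpha>) @ y # [])"
    using pf_row_move_across[where f=f, OF antisym, of \<alpha> x "[y]"] d ev by simp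
  also have "\<dots> = - pf_row f (y # x # \<alpha>)"
    using pf_row_move_across[where f=f, OF antisym, of "x # \<alpha>" y "[]"] d ev by simp
  also have "\<dots> = pf_row f (x # y # \<alpha>)"
    using pf_row_swap_first[where f=f, OF antisym, of x y \<alpha>] d by simp
  finally show ?thesis by simp
qed

section \<open>The product identity for the expansion\<close>

definition exchange_sum :: "('a \<Rightarrow> 'a \<Rightarrow> 'r::comm_ring_1) \<Rightarrow> 'a list \<Rightarrow> 'a list \<Rightarrow> 'r" where
  "exchange_sum f \<alpha> \<beta> =
     (\<Sum>y\<in>set \<beta>. (-1) ^ pos \<beta> y * pf_row f (y # \<alpha>) * pf_row f (\<alpha> @ remove1 y \<beta>))"

definition pair_exchange_sum :: "('a \<Rightarrow> 'a \<Rightarrow> 'r::comm_ring_1) \<Rightarrow> 'a list \<Rightarrow> 'a \<Rightarrow> 'a list \<Rightarrow> 'r" where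
  "pair_exchange_sum f \<alpha> x \<beta> =
     (\<Sum>y\<in>set \<beta>. (-1) ^ pos \<beta> y * pf_row f (x # y # \<alpha>) * pf_row f (\<alpha> @ remove1 y \<beta>))"

lemma exchange_sum_Cons:
  fixes f :: "'a \<Rightarrow> 'a \<Rightarrow> 'r::comm_ring_1"
  assumes antisym: "\<And>u v. f u v = - f v u"
    and d: "distinct (\<alpha> @ z # \<beta>)" and "odd (length \<alpha>)"
  shows "exchange_sum f \<alpha> (z # \<beta>) = pf_row f (z # \<alpha>) * pf_row f (\<alpha> @ \<beta>) +
    (\<Sum>y\<in>set \<beta>. (-1) ^ pos \<beta> y * pf_row f (y # \<alpha>) * pf_row f (z # \<alpha> @ remove1 y \<beta>))"
proof -
  have z: "z \<notin> set \<beta>" using d by simp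
  have "pf_row f (\<alpha> @ z # remove1 y \<beta>) = - pf_row f (z # \<alpha> @ remove1 y \<beta>)" if "y \<in> set \<beta>" for y
    using pf_row_move_across[where f=f, OF antisym, of \<alpha> z "remove1 y \<beta>"] d assms(3)
    by (auto simp: distinct_remove1 dest: in_set_remove1)
  with z show ?thesis
    unfolding exchange_sum_def by (auto simp: sum.insert intro!: sum.cong)
qed

lemma pf_row_mult_remove1:
  fixes f :: "'a \<Rightarrow> 'a \<Rightarrow> 'r::comm_ring_1"
  assumes antisym: "\<And>u v. f u v = - f v u"
    and d: "distinct (\<alpha> @ \<beta>)" and ev: "even (length \<alpha>)" and z: "z \<in> set \<alpha>"
    and vanish: "exchange_sum f (remove1 z \<alpha>) (z # \<beta>) = 0"
  shows "pf_row f \<alpha> * pf_row f (remove1 z \<alpha> @ \<beta>) =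
    - (\<Sum>y\<in>set \<beta>. (-1) ^ pos \<beta> y * pf_row f (y # remove1 z \<alpha>) * pf_row f (\<alpha> @ remove1 y \<beta>))"
proof -
  let ?\<alpha>' = "remove1 z \<alpha>" and ?s = "(-1::'r) ^ pos \<alpha> z"
  have move: "pf_row f (z # ?\<alpha>' @ \<gamma>) = ?s * pf_row f (\<alpha> @ \<gamma>)" if "distinct (\<alpha> @ \<gamma>)" for \<gamma>
    using pf_row_move_to_front[where f=f, OF antisym, of "[]" \<alpha> \<gamma> z] that z by simp
  have d': "distinct (?\<alpha>' @ z # \<beta>)" using d z by (auto simp: distinct_remove1 dest: in_set_remove1)
  have "odd (length ?\<alpha>')" using ev z by (cases \<alpha>) (auto simp: length_remove1)
  then have "0 = pf_row f (z # ?\<alpha>') * pf_row f (?\<alpha>' @ \<beta>) +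
      (\<Sum>y\<in>set \<beta>. (-1) ^ pos \<beta> y * pf_row f (y # ?\<alpha>') * pf_row f (z # ?\<alpha>' @ remove1 y \<beta>))"
    using exchange_sum_Cons[where f=f, OF antisym d'] vanish by simp
  also have "\<dots> = ?s * (pf_row f \<alpha> * pf_row f (?\<alpha>' @ \<beta>) +
      (\<Sum>y\<in>set \<beta>. (-1) ^ pos \<beta> y * pf_row f (y # ?\<alpha>') * pf_row f (\<alpha> @ remove1 y \<beta>)))"
  proof -
    have "distinct (\<alpha> @ remove1 y \<beta>)" for y using d by (auto simp: distinct_remove1 dest: in_set_remove1)
    then show ?thesis using move[of "[]"] move[of "remove1 y \<beta>" for y] d
      by (simp add: distrib_left sum_distrib_left mult_ac)
  qed
  finally have "?s * (?s * (pf_row f \<alpha> * pf_row f (?\<alpha>' @ \<beta>) +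
      (\<Sum>y\<in>set \<beta>. (-1) ^ pos \<beta> y * pf_row f (y # ?\<alpha>') * pf_row f (\<alpha> @ remove1 y \<beta>)))) = 0"
    by simp
  then show ?thesis by (simp only: minus_one_power_cancel eq_neg_iff_add_eq_0)
qed

lemma pf_row_product_from_vanishing:
  fixes f :: "'a \<Rightarrow> 'a \<Rightarrow> 'r::comm_ring_1"
  assumes antisym: "\<And>u v. f u v = - f v u"
    and d: "distinct (x # \<alpha> @ \<beta>)" and ev: "even (length \<alpha>)"
    and vanish: "\<And>z. z \<in> set \<alpha> \<Longrightarrow> exchange_sum f (remove1 z \<alpha>) (z # \<beta>) = 0"
  shows "pf_row f \<alpha> * pf_row f (x # \<alpha> @ \<beta>) = pair_exchange_sum f \<alpha> x \<beta>"
proof -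
  let ?P = "pf_row f \<alpha>"
  let ?c = "\<lambda>z. (-1) ^ pos \<alpha> z * f x z" and ?s = "\<lambda>y. (-1) ^ pos \<beta> y"
  have disj: "y \<notin> set \<alpha>" if "y \<in> set \<beta>" for y using d that by auto
  have "pair_exchange_sum f \<alpha> x \<beta> = (\<Sum>y\<in>set \<beta>. ?s y * (f x y * ?P -
      (\<Sum>z\<in>set \<alpha>. ?c z * pf_row f (y # remove1 z \<alpha>))) * pf_row f (\<alpha> @ remove1 y \<beta>))"
    unfolding pair_exchange_sum_def using disj by (intro sum.cong) (simp_all add: pf_row_Cons_Cons)
  also have "\<dots> = ?P * (\<Sum>y\<in>set \<beta>. ?s y * f x y * pf_row f (\<alpha> @ remove1 y \<beta>)) -
      (\<Sum>z\<in>set \<alpha>. ?c z * (\<Sum>y\<in>set \<beta>. ?s y * pf_row f (y # remove1 z \<alpha>) * pf_row f (\<alpha> @ remove1 y \<beta>)))"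
    by (simp add: algebra_simps sum_subtractf sum_distrib_left sum_distrib_right sum.swap[of _ "set \<alpha>"])
  also have "\<dots> = ?P * (\<Sum>y\<in>set \<beta>. ?s y * f x y * pf_row f (\<alpha> @ remove1 y \<beta>)) +
      (\<Sum>z\<in>set \<alpha>. ?c z * (?P * pf_row f (remove1 z \<alpha> @ \<beta>)))"
    using pf_row_mult_remove1[where f=f, OF antisym _ ev _ vanish] d by (simp add: sum_negf)
  also have "\<dots> = ?P * pf_row f (x # \<alpha> @ \<beta>)"
    using pf_row_Cons_append[OF d, of f] ev by (simp add: power_add distrib_left sum_distrib_left mult_ac)
  finally show ?thesis by (simp add: mult_ac)
qed

lemma sum_exchange_sum_remove1:
  assumes "distinct \<beta>"
  shows "(\<Sum>y\<in>set \<beta>. (-1) ^ pos \<beta> y * pf_row f (y # \<alpha>) *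
      (\<Sum>u\<in>set \<beta> - {y}. (-1) ^ pos (remove1 y \<beta>) u * g u * pf_row f (\<alpha> @ remove1 u (remove1 y \<beta>))))
    = - (\<Sum>u\<in>set \<beta>. (-1) ^ pos \<beta> u * g u * exchange_sum f \<alpha> (remove1 u \<beta>))"
proof -
  have "(\<Sum>y\<in>set \<beta>. (-1) ^ pos \<beta> y * pf_row f (y # \<alpha>) *
      (\<Sum>u\<in>set \<beta> - {y}. (-1) ^ pos (remove1 y \<beta>) u * g u * pf_row f (\<alpha> @ remove1 u (remove1 y \<beta>))))
    = (\<Sum>y\<in>set \<beta>. \<Sum>u\<in>set \<beta> - {y}. (-1) ^ (pos \<beta> y + pos (remove1 y \<beta>) u) *
        (pf_row f (y # \<alpha>) * g u * pf_row f (\<alpha> @ remove1 u (remove1 y \<beta>))))"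
    by (simp add: sum_distrib_left power_add mult_ac)
  also have "\<dots> = - (\<Sum>y\<in>set \<beta>. \<Sum>u\<in>set \<beta> - {y}. (-1) ^ (pos \<beta> y + pos (remove1 y \<beta>) u) *
        (pf_row f (u # \<alpha>) * g y * pf_row f (\<alpha> @ remove1 y (remove1 u \<beta>))))"
    by (rule sum_pos_pairs_swap[OF assms])
  also have "\<dots> = - (\<Sum>u\<in>set \<beta>. (-1) ^ pos \<beta> u * g u * exchange_sum f \<alpha> (remove1 u \<beta>))"
    using assms
    by (simp add: exchange_sum_def set_remove1_eq remove1_commute sum_distrib_left power_add mult_ac)
  finally show ?thesis .
qed

lemma sum_pair_exchange_sum_remove1:
  fixes f :: "'a \<Rightarrow> 'a \<Rightarrow> 'r::comm_ring_1"
  assumes antisym: "\<And>u v. f u v = - f v u" and d: "distinct (\<alpha> @ \<beta>)"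
  shows "(\<Sum>y\<in>set \<beta>. (-1) ^ pos \<beta> y * pf_row f (y # \<alpha>) *
      (\<Sum>w\<in>set \<alpha>. (-1) ^ pos \<alpha> w * g w * pf_row f (remove1 w \<alpha> @ remove1 y \<beta>)))
    = - (\<Sum>w\<in>set \<alpha>. g w * pair_exchange_sum f (remove1 w \<alpha>) w \<beta>)"
proof -
  have flip: "(-1) ^ pos \<alpha> w * pf_row f (y # \<alpha>) = - pf_row f (w # y # remove1 w \<alpha>)"
    if "w \<in> set \<alpha>" "y \<in> set \<beta>" for w y
  proof -
    have "y \<notin> set \<alpha>" using that d by auto
    moreover have "distinct (y # w # remove1 w \<alpha>)"
      using that d by (auto simp: distinct_remove1 dest: in_set_remove1)
    ultimately show ?thesis
      using pf_row_move_to_front[where f=f, OF antisym, of "[y]" \<alpha> "[]" w]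
        pf_row_swap_first[where f=f, OF antisym, of w y "remove1 w \<alpha>"] that d
      by simp
  qed
  have "(\<Sum>y\<in>set \<beta>. (-1) ^ pos \<beta> y * pf_row f (y # \<alpha>) *
      (\<Sum>w\<in>set \<alpha>. (-1) ^ pos \<alpha> w * g w * pf_row f (remove1 w \<alpha> @ remove1 y \<beta>))) =
      (\<Sum>y\<in>set \<beta>. \<Sum>w\<in>set \<alpha>. g w * ((-1) ^ pos \<beta> y * ((-1) ^ pos \<alpha> w * pf_row f (y # \<alpha>)) *
        pf_row f (remove1 w \<alpha> @ remove1 y \<beta>)))"
    by (simp add: sum_distrib_left mult_ac)
  also have "\<dots> = (\<Sum>y\<in>set \<beta>. \<Sum>w\<in>set \<alpha>. - (g w * ((-1) ^ pos \<beta> y *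
      pf_row f (w # y # remove1 w \<alpha>) * pf_row f (remove1 w \<alpha> @ remove1 y \<beta>))))"
    using flip by (intro sum.cong refl) simp
  also have "\<dots> = - (\<Sum>w\<in>set \<alpha>. g w * pair_exchange_sum f (remove1 w \<alpha>) w \<beta>)"
    by (simp add: pair_exchange_sum_def sum_distrib_left sum_negf sum.swap[of _ "set \<beta>"])
  finally show ?thesis .
qed

lemma exchange_sum_Cons_eq_0:
  fixes f :: "'a \<Rightarrow> 'a \<Rightarrow> 'r::comm_ring_1"
  assumes antisym: "\<And>u v. f u v = - f v u"
    and d: "distinct (\<alpha> @ z # \<beta>)" and od: "odd (length \<alpha>)"
    and expansion: "\<And>w. w \<in> set \<alpha> \<Longrightarrow>
      pf_row f (remove1 w \<alpha>) * pf_row f (w # remove1 w \<alpha> @ \<beta>) = pair_exchange_sum f (remove1 w \<alpha>) w \<beta>"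
    and vanish: "\<And>u. u \<in> set \<beta> \<Longrightarrow> exchange_sum f \<alpha> (remove1 u \<beta>) = 0"
  shows "exchange_sum f \<alpha> (z # \<beta>) = 0"
proof -
  let ?s = "\<lambda>y. (-1) ^ pos \<beta> y" and ?c = "\<lambda>w. (-1) ^ pos \<alpha> w * f z w"
  let ?X = "pf_row f (z # \<alpha>) * pf_row f (\<alpha> @ \<beta>)"
  have db: "distinct \<beta>" and dab: "distinct (\<alpha> @ \<beta>)" using d by auto
  have "?X = (\<Sum>w\<in>set \<alpha>. f z w * (pf_row f (remove1 w \<alpha>) * ((-1) ^ pos \<alpha> w * pf_row f (\<alpha> @ \<beta>))))"
    by (simp add: pf_row.simps(2) sum_distrib_left sum_distrib_right mult_ac)
  also have "\<dots> = (\<Sum>w\<in>set \<alpha>. f z w * pair_exchange_sum f (remove1 w \<alpha>) w \<beta>)"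
    using pf_row_move_to_front[where f=f, OF antisym, of "[]" \<alpha> \<beta>] dab expansion
    by (intro sum.cong) simp_all
  finally have cross: "(\<Sum>y\<in>set \<beta>. ?s y * pf_row f (y # \<alpha>) *
      (\<Sum>w\<in>set \<alpha>. ?c w * pf_row f (remove1 w \<alpha> @ remove1 y \<beta>))) = - ?X"
    using sum_pair_exchange_sum_remove1[where f=f, OF antisym dab, of "f z"] by (simp add: mult.assoc)
  have "pf_row f (z # \<alpha> @ remove1 y \<beta>) =
      (\<Sum>w\<in>set \<alpha>. ?c w * pf_row f (remove1 w \<alpha> @ remove1 y \<beta>)) -
      (\<Sum>u\<in>set \<beta> - {y}. (-1) ^ pos (remove1 y \<beta>) u * f z u * pf_row f (\<alpha> @ remove1 u (remove1 y \<beta>)))"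
    for y
  proof -
    have "distinct (z # \<alpha> @ remove1 y \<beta>)" using d by (auto simp: distinct_remove1 dest: in_set_remove1)
    then show ?thesis using od db by (simp add: pf_row_Cons_append power_add set_remove1_eq sum_negf)
  qed
  then have "exchange_sum f \<alpha> (z # \<beta>) = ?X +
      (\<Sum>y\<in>set \<beta>. ?s y * pf_row f (y # \<alpha>) *
        (\<Sum>w\<in>set \<alpha>. ?c w * pf_row f (remove1 w \<alpha> @ remove1 y \<beta>))) -
      (\<Sum>y\<in>set \<beta>. ?s y * pf_row f (y # \<alpha>) * (\<Sum>u\<in>set \<beta> - {y}.
        (-1) ^ pos (remove1 y \<beta>) u * f z u * pf_row f (\<alpha> @ remove1 u (remove1 y \<beta>))))"
    using exchange_sum_Cons[where f=f, OF antisym d od]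
    by (simp add: right_diff_distrib sum_subtractf add_diff_eq)
  also have "\<dots> = 0"
    unfolding cross sum_exchange_sum_remove1[OF db] using vanish by simp
  finally show ?thesis .
qed

lemma exchange_sum_odd_eq_0:
  fixes f :: "'a \<Rightarrow> 'a \<Rightarrow> 'r::comm_ring_1"
  assumes antisym: "\<And>u v. f u v = - f v u"
  shows "distinct (\<alpha> @ \<beta>) \<Longrightarrow> odd (length \<alpha>) \<Longrightarrow> exchange_sum f \<alpha> \<beta> = 0"
proof (induction "length \<alpha> + length \<beta>" arbitrary: \<alpha> \<beta> rule: less_induct)
  case less
  show ?case
  proof (cases \<beta>)
    case Nil
    then show ?thesis by (simp add: exchange_sum_def)
  next
    case (Cons z \<beta>')
    have d: "distinct (\<alpha> @ z # \<beta>')" using less.prems Cons by simp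
    have "exchange_sum f \<alpha> (z # \<beta>') = 0"
    proof (rule exchange_sum_Cons_eq_0[where f=f, OF antisym d less.prems(2)])
      show "exchange_sum f \<alpha> (remove1 u \<beta>') = 0" if "u \<in> set \<beta>'" for u
        using that Cons d
        by (intro less.hyps less.prems(2)) (auto simp: length_remove1 distinct_remove1 dest: in_set_remove1)
      fix w assume w: "w \<in> set \<alpha>"
      show "pf_row f (remove1 w \<alpha>) * pf_row f (w # remove1 w \<alpha> @ \<beta>') =
          pair_exchange_sum f (remove1 w \<alpha>) w \<beta>'"
      proof (rule pf_row_product_from_vanishing[where f=f, OF antisym])
        show "distinct (w # remove1 w \<alpha> @ \<beta>')"
          using d w by (auto simp: distinct_remove1 dest: in_set_remove1)
        show "even (length (remove1 w \<alpha>))"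
          using less.prems(2) w by (cases \<alpha>) (auto simp: length_remove1)
        fix v assume v: "v \<in> set (remove1 w \<alpha>)"
        have "length (remove1 w \<alpha>) = length \<alpha> - 1" "0 < length (remove1 w \<alpha>)"
          using w length_pos_if_in_set[OF v] by (simp_all add: length_remove1)
        moreover have "length (remove1 v (remove1 w \<alpha>)) = length (remove1 w \<alpha>) - 1"
          using v by (simp add: length_remove1)
        ultimately have "length (remove1 v (remove1 w \<alpha>)) = length \<alpha> - 2" "2 \<le> length \<alpha>"
          by auto
        moreover have "distinct (remove1 v (remove1 w \<alpha>) @ v # \<beta>')"
          using d v by (auto simp: distinct_remove1 dest: in_set_remove1)
        ultimately show "exchange_sum f (remove1 v (remove1 w \<alpha>)) (v # \<beta>') = 0"
          using less.prems(2) Cons by (intro less.hyps) auto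
      qed
    qed
    then show ?thesis using Cons by simp
  qed
qed

lemma pf_row_product_expansion:
  fixes f :: "'a \<Rightarrow> 'a \<Rightarrow> 'r::comm_ring_1"
  assumes antisym: "\<And>u v. f u v = - f v u"
    and d: "distinct (x # \<alpha> @ \<beta>)" and ev: "even (length \<alpha>)"
  shows "pf_row f \<alpha> * pf_row f (x # \<alpha> @ \<beta>) = pair_exchange_sum f \<alpha> x \<beta>"
proof (rule pf_row_product_from_vanishing[where f=f, OF antisym d ev])
  fix z assume "z \<in> set \<alpha>"
  then show "exchange_sum f (remove1 z \<alpha>) (z # \<beta>) = 0"
    using d ev by (intro exchange_sum_odd_eq_0[where f=f, OF antisym])
      (auto simp: length_remove1 distinct_remove1 dest: in_set_remove1)
qed

lemma pf_row_overlap_identity: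
  fixes f :: "'a \<Rightarrow> 'a \<Rightarrow> 'r::comm_ring_1"
  assumes antisym: "\<And>u v. f u v = - f v u"
    and d: "distinct (\<alpha> @ \<beta>)" and ev: "even (length \<alpha>)" and x: "x \<in> set \<beta>"
  shows "pf_row f \<alpha> * pf_row f (\<alpha> @ \<beta>) =
    (\<Sum>y\<in>set (remove1 x \<beta>). (-1) ^ (pos \<beta> x + pos (remove1 x \<beta>) y) *
      pf_row f (\<alpha> @ [x, y]) * pf_row f (\<alpha> @ remove1 y (remove1 x \<beta>)))"
proof -
  let ?\<beta>' = "remove1 x \<beta>" and ?s = "(-1::'r) ^ pos \<beta> x"
  have x\<alpha>: "x \<notin> set \<alpha>" using d x by auto
  have "pf_row f ([] @ x # remove1 x (\<alpha> @ \<beta>) @ []) = (-1) ^ pos (\<alpha> @ \<beta>) x * pf_row f ([] @ (\<alpha> @ \<beta>) @ [])"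
    using d x by (intro pf_row_move_to_front[where f=f, OF antisym]) auto
  then have "pf_row f (\<alpha> @ \<beta>) = ?s * pf_row f (x # \<alpha> @ ?\<beta>')"
    using x\<alpha> ev by (simp add: remove1_append pos_append power_add minus_one_power_cancel)
  then have "pf_row f \<alpha> * pf_row f (\<alpha> @ \<beta>) = ?s * (pf_row f \<alpha> * pf_row f (x # \<alpha> @ ?\<beta>'))"
    by (simp add: mult_ac)
  also have "pf_row f \<alpha> * pf_row f (x # \<alpha> @ ?\<beta>') = pair_exchange_sum f \<alpha> x ?\<beta>'"
    using d x x\<alpha> ev by (intro pf_row_product_expansion[where f=f, OF antisym])
      (auto simp: distinct_remove1 dest: in_set_remove1)
  also have "?s * pair_exchange_sum f \<alpha> x ?\<beta>' = (\<Sum>y\<in>set ?\<beta>'. ?s * ((-1) ^ pos ?\<beta>' y *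
      pf_row f (x # y # \<alpha>) * pf_row f (\<alpha> @ remove1 y ?\<beta>')))"
    by (simp add: pair_exchange_sum_def sum_distrib_left)
  also have "\<dots> = (\<Sum>y\<in>set ?\<beta>'. (-1) ^ (pos \<beta> x + pos ?\<beta>' y) *
      pf_row f (\<alpha> @ [x, y]) * pf_row f (\<alpha> @ remove1 y ?\<beta>'))"
  proof (intro sum.cong refl)
    fix y assume "y \<in> set ?\<beta>'"
    then have "pf_row f (\<alpha> @ [x, y]) = pf_row f (x # y # \<alpha>)"
      using d x x\<alpha> ev by (intro pf_row_append_pair[where f=f, OF antisym]) (auto dest: in_set_remove1)
    then show "?s * ((-1) ^ pos ?\<beta>' y * pf_row f (x # y # \<alpha>) * pf_row f (\<alpha> @ remove1 y ?\<beta>')) =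
        (-1) ^ (pos \<beta> x + pos ?\<beta>' y) * pf_row f (\<alpha> @ [x, y]) * pf_row f (\<alpha> @ remove1 y ?\<beta>')"
      by (simp add: power_add mult_ac)
  qed
  finally show ?thesis .
qed

section \<open>Listings of pair partitions\<close>

fun pair_prod :: "('a \<Rightarrow> 'a \<Rightarrow> 'r::comm_ring_1) \<Rightarrow> 'a list \<Rightarrow> 'r" where
  "pair_prod f (u # v # zs) = f u v * pair_prod f zs"
| "pair_prod f _ = 1"

fun pairs_of :: "'a list \<Rightarrow> 'a set set" where
  "pairs_of (u # v # zs) = insert {u, v} (pairs_of zs)"
| "pairs_of _ = {}"

lemma prod_pairs_eq_pair_prod:
  "even (length ys) \<Longrightarrow> (\<Prod>i<length ys div 2. f (ys ! (2*i)) (ys ! (2*i+1))) = pair_prod f ys"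
proof (induction f ys rule: pair_prod.induct)
  case (1 f u v zs)
  then show ?case by (simp add: prod.lessThan_Suc_shift del: prod.lessThan_Suc)
qed auto

lemma pairs_of_conv_nth:
  "even (length ys) \<Longrightarrow> {{ys ! (2*i), ys ! (2*i+1)} | i. i < length ys div 2} = pairs_of ys"
proof (induction ys rule: pairs_of.induct)
  case (1 u v zs)
  have "{g i | i. i < Suc n} = insert (g 0) {g (Suc i) | i. i < n}" for g :: "nat \<Rightarrow> 'a set" and n
    by (auto simp: less_Suc_eq_0_disj)
  moreover have "(u # v # zs) ! (2 * Suc i) = zs ! (2 * i)"
    "(u # v # zs) ! (2 * Suc i + 1) = zs ! (2 * i + 1)" for i
    by (simp_all add: numeral_2_eq_2)
  ultimately show ?case using 1 by simp
qed auto

lemma lists_pairing_iff: "lists_pairing M ys \<longleftrightarrow> distinct ys \<and> even (length ys) \<and> M = pairs_of ys"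
  using pairs_of_conv_nth[of ys] unfolding lists_pairing_def by auto

lemma pairs_of_subset: "P \<in> pairs_of ys \<Longrightarrow> P \<subseteq> set ys"
  by (induction ys rule: pairs_of.induct) auto

lemma Union_pairs_of: "even (length ys) \<Longrightarrow> \<Union>(pairs_of ys) = set ys"
  by (induction ys rule: pairs_of.induct) auto

lemma pairs_of_append: "even (length xs) \<Longrightarrow> pairs_of (xs @ ys) = pairs_of xs \<union> pairs_of ys"
  by (induction xs rule: pairs_of.induct) auto

lemma pair_prod_append: "even (length xs) \<Longrightarrow> pair_prod f (xs @ ys) = pair_prod f xs * pair_prod f ys"
  by (induction f xs rule: pair_prod.induct) auto

lemma pairs_of_empty_iff: "even (length ys) \<Longrightarrow> pairs_of ys = {} \<longleftrightarrow> ys = []"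
  by (cases ys rule: pairs_of.cases) auto

lemma pairs_of_memD:
  "P \<in> pairs_of ys \<Longrightarrow> \<exists>ys1 a b ys2. ys = ys1 @ a # b # ys2 \<and> even (length ys1) \<and> P = {a, b}"
proof (induction ys rule: pairs_of.induct)
  case (1 u v zs)
  show ?case
  proof (cases "P = {u, v}")
    case True
    then show ?thesis by (intro exI[of _ "[]"]) auto
  next
    case False
    then obtain ys1 a b ys2 where "zs = ys1 @ a # b # ys2" "even (length ys1)" "P = {a, b}"
      using 1 by auto
    then show ?thesis by (intro exI[of _ "u # v # ys1"]) auto
  qed
qed auto

lemma exists_list_pairs_of:
  "finite M \<Longrightarrow> (\<forall>P\<in>M. card P = 2) \<Longrightarrow> (\<forall>P\<in>M. \<forall>Q\<in>M. P \<noteq> Q \<longrightarrow> P \<inter> Q = {}) \<Longrightarrow>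
    \<exists>ys. distinct ys \<and> even (length ys) \<and> pairs_of ys = M"
proof (induction M rule: finite_induct)
  case empty
  then show ?case by (intro exI[of _ "[]"]) auto
next
  case (insert P M)
  then obtain ys where ys: "distinct ys" "even (length ys)" "pairs_of ys = M" by auto
  obtain u v where P: "P = {u, v}" "u \<noteq> v" using insert.prems(1) card_2_iff by (metis insertI1)
  have "P \<inter> Q = {}" if "Q \<in> M" for Q using insert.prems(2) insert.hyps(2) that by auto
  then have "u \<notin> set ys" "v \<notin> set ys" using Union_pairs_of[OF ys(2)] ys(3) P by auto
  then show ?case using ys P by (intro exI[of _ "u # v # ys"]) auto
qed

lemma move_pair_to_front:
  fixes \<Phi> :: "'a list \<Rightarrow> 'r"
  assumes swap: "\<And>\<xi> a b c d \<eta>. even (length \<xi>) \<Longrightarrow> \<Phi> (\<xi> @ c # d # a # b # \<eta>) = \<Phi> (\<xi> @ a # b # c # d # \<eta>)"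
  shows "even (length ys) \<Longrightarrow> even (length \<xi>) \<Longrightarrow> \<Phi> (\<xi> @ ys @ a # b # zs) = \<Phi> (\<xi> @ a # b # ys @ zs)"
proof (induction ys arbitrary: \<xi> rule: pairs_of.induct)
  case (1 c d ys)
  have "\<Phi> (\<xi> @ (c # d # ys) @ a # b # zs) = \<Phi> ((\<xi> @ [c, d]) @ ys @ a # b # zs)" by simp
  also have "\<dots> = \<Phi> ((\<xi> @ [c, d]) @ a # b # ys @ zs)" using 1 by (intro "1.IH") auto
  also have "\<dots> = \<Phi> (\<xi> @ a # b # c # d # ys @ zs)" using swap[OF "1.prems"(2)] by simp
  finally show ?case by simp
qed auto

lemma eq_if_pairs_of_eq:
  fixes \<Phi> :: "'a list \<Rightarrow> 'r"
  assumes flip: "\<And>\<xi> u v \<eta>. even (length \<xi>) \<Longrightarrow> \<Phi> (\<xi> @ v # u # \<eta>) = \<Phi> (\<xi> @ u # v # \<eta>)"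
    and swap: "\<And>\<xi> a b c d \<eta>. even (length \<xi>) \<Longrightarrow> \<Phi> (\<xi> @ c # d # a # b # \<eta>) = \<Phi> (\<xi> @ a # b # c # d # \<eta>)"
  shows "distinct ys \<Longrightarrow> distinct zs \<Longrightarrow> even (length ys) \<Longrightarrow> even (length zs) \<Longrightarrow>
    pairs_of ys = pairs_of zs \<Longrightarrow> even (length \<xi>) \<Longrightarrow> \<Phi> (\<xi> @ ys) = \<Phi> (\<xi> @ zs)"
proof (induction zs arbitrary: \<xi> ys rule: pairs_of.induct)
  case (1 p q zs)
  have "{p, q} \<in> pairs_of ys" using "1.prems"(5) by simp
  then obtain ys1 a b ys2 where ys: "ys = ys1 @ a # b # ys2" "even (length ys1)" "{p, q} = {a, b}"
    using pairs_of_memD by blast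
  have "\<Phi> (\<xi> @ ys) = \<Phi> (\<xi> @ a # b # ys1 @ ys2)"
    using move_pair_to_front[where \<Phi>=\<Phi>, OF swap] ys "1.prems"(6) by simp
  also have "\<dots> = \<Phi> (\<xi> @ p # q # ys1 @ ys2)"
    using ys(3) flip[OF "1.prems"(6)] "1.prems"(2) by (auto simp: doubleton_eq_iff)
  also have "\<dots> = \<Phi> ((\<xi> @ [p, q]) @ zs)"
  proof -
    have "a \<notin> set (ys1 @ ys2)" "b \<notin> set (ys1 @ ys2)" "p \<notin> set zs" "q \<notin> set zs"
      using "1.prems"(1,2) ys(1) by auto
    then have "{a, b} \<notin> pairs_of (ys1 @ ys2)" "{p, q} \<notin> pairs_of zs"
      using pairs_of_subset by blast+
    moreover have "pairs_of ys = insert {a, b} (pairs_of (ys1 @ ys2))"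
      using ys by (simp add: pairs_of_append)
    ultimately have "pairs_of (ys1 @ ys2) = pairs_of zs"
      using "1.prems"(5) ys(3) by (simp add: insert_ident)
    then have "\<Phi> ((\<xi> @ [p, q]) @ ys1 @ ys2) = \<Phi> ((\<xi> @ [p, q]) @ zs)"
      using "1.prems" ys by (intro "1.IH") auto
    then show ?thesis by simp
  qed
  finally show ?case by simp
qed (auto simp: pairs_of_empty_iff)

section \<open>The expansion computes the Pfaffian\<close>

lemma finite_pair_partitions: "finite S \<Longrightarrow> finite (pair_partitions S)"
  by (rule finite_subset[of _ "Pow (Pow S)"]) (auto simp: pair_partitions_def)

lemma insert_pair_in_pair_partitions:
  assumes "a \<notin> S" "y \<in> S" "M \<in> pair_partitions (S - {y})"
  shows "insert {a, y} M \<in> pair_partitions (insert a S)"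
proof -
  have "a \<noteq> y" using assms by auto
  moreover have "P \<inter> {a, y} = {}" "P \<subseteq> S" "card P = 2" if "P \<in> M" for P
    using assms(1,3) that unfolding pair_partitions_def by auto
  ultimately show ?thesis
    using assms(2,3) unfolding pair_partitions_def by (auto simp: Int_commute)
qed

lemma pair_partitions_insert_decomp:
  assumes "a \<notin> S" "M \<in> pair_partitions (insert a S)"
  obtains y where "y \<in> S" "M - {{a, y}} \<in> pair_partitions (S - {y})" "M = insert {a, y} (M - {{a, y}})"
proof -
  have M: "\<forall>P\<in>M. P \<subseteq> insert a S \<and> card P = 2" "\<forall>P\<in>M. \<forall>Q\<in>M. P \<noteq> Q \<longrightarrow> P \<inter> Q = {}"
    "\<Union>M = insert a S" using assms(2) unfolding pair_partitions_def by auto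
  have "a \<in> \<Union>M" using M(3) by simp
  then obtain P where P: "P \<in> M" "a \<in> P" by blast
  moreover obtain u v where "P = {u, v}" "u \<noteq> v" using M(1) P(1) card_2_iff by metis
  ultimately obtain y where y: "P = {a, y}" "y \<noteq> a" by auto
  have "y \<in> S" using M(1) P y by auto
  moreover have "M - {{a, y}} \<in> pair_partitions (S - {y})"
  proof -
    have sub: "Q \<subseteq> S - {y}" "card Q = 2" if "Q \<in> M - {{a, y}}" for Q
    proof -
      have "Q \<inter> {a, y} = {}" using M(2) P y that by auto
      then show "Q \<subseteq> S - {y}" "card Q = 2" using M(1) that by auto
    qed
    have "S - {y} \<subseteq> \<Union>(M - {{a, y}})"
    proof
      fix z assume z: "z \<in> S - {y}"
      then obtain Q where "Q \<in> M" "z \<in> Q" using M(3) by blast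
      moreover have "Q \<noteq> {a, y}" using z \<open>z \<in> Q\<close> assms(1) by auto
      ultimately show "z \<in> \<Union>(M - {{a, y}})" by blast
    qed
    moreover have "\<Union>(M - {{a, y}}) \<subseteq> S - {y}" using sub(1) by blast
    ultimately have "\<Union>(M - {{a, y}}) = S - {y}" by (rule equalityI[rotated])
    then show ?thesis using sub M(2) unfolding pair_partitions_def by auto
  qed
  moreover have "M = insert {a, y} (M - {{a, y}})" using P y by auto
  ultimately show ?thesis by (rule that)
qed

lemma bij_betw_insert_pair:
  assumes "a \<notin> S"
  shows "bij_betw (\<lambda>(y, M). insert {a, y} M) (SIGMA y:S. pair_partitions (S - {y})) (pair_partitions (insert a S))"
  unfolding bij_betw_def
proof
  have fresh: "{a, z} \<notin> M" if "M \<in> pair_partitions (S - {y})" for z y M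
  proof
    assume "{a, z} \<in> M"
    then have "a \<in> \<Union>M" by blast
    moreover have "\<Union>M = S - {y}" using that unfolding pair_partitions_def by simp
    ultimately show False using assms by simp
  qed
  show "inj_on (\<lambda>(y, M). insert {a, y} M) (SIGMA y:S. pair_partitions (S - {y}))"
  proof (rule inj_onI, clarify)
    fix y1 M1 y2 M2
    assume y: "y1 \<in> S" "y2 \<in> S" and M: "M1 \<in> pair_partitions (S - {y1})" "M2 \<in> pair_partitions (S - {y2})"
      and eq: "insert {a, y1} M1 = insert {a, y2} M2"
    have "{a, y1} \<in> insert {a, y2} M2" using eq by (metis insertI1)
    then have "{a, y1} = {a, y2}" using fresh[OF M(2)] by simp
    then have "y1 = y2" using y assms by (auto simp: doubleton_eq_iff)
    then show "y1 = y2 \<and> M1 = M2" using eq fresh[OF M(1)] fresh[OF M(2)] by (simp add: insert_ident)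
  qed
  show "(\<lambda>(y, M). insert {a, y} M) ` (SIGMA y:S. pair_partitions (S - {y})) = pair_partitions (insert a S)"
  proof
    show "(\<lambda>(y, M). insert {a, y} M) ` (SIGMA y:S. pair_partitions (S - {y})) \<subseteq> pair_partitions (insert a S)"
      using insert_pair_in_pair_partitions[OF assms] by auto
    show "pair_partitions (insert a S) \<subseteq> (\<lambda>(y, M). insert {a, y} M) ` (SIGMA y:S. pair_partitions (S - {y}))"
    proof
      fix M assume "M \<in> pair_partitions (insert a S)"
      then obtain y where "y \<in> S" "M - {{a, y}} \<in> pair_partitions (S - {y})" "M = insert {a, y} (M - {{a, y}})"
        using pair_partitions_insert_decomp[OF assms] by blast
      then show "M \<in> (\<lambda>(y, M). insert {a, y} M) ` (SIGMA y:S. pair_partitions (S - {y}))"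
        by (intro image_eqI[of _ _ "(y, M - {{a, y}})"]) auto
    qed
  qed
qed

definition pf_term :: "('a \<Rightarrow> 'a \<Rightarrow> 'r::comm_ring_1) \<Rightarrow> 'a list \<Rightarrow> 'a set set \<Rightarrow> 'r" where
  "pf_term f \<alpha> M = (let ys = (SOME ys. lists_pairing M ys)
     in word_sign \<alpha> ys * (\<Prod>i<length ys div 2. f (ys ! (2*i)) (ys ! (2*i+1))))"

lemma pf_eq_sum_pf_term:
  "distinct \<alpha> \<Longrightarrow> even (length \<alpha>) \<Longrightarrow> pf f \<alpha> = (\<Sum>M\<in>pair_partitions (set \<alpha>). pf_term f \<alpha> M)"
  by (simp add: pf_def pf_term_def)

lemma signed_pair_prod_flip:
  fixes f :: "'a \<Rightarrow> 'a \<Rightarrow> 'r::comm_ring_1"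
  assumes antisym: "\<And>u v. f u v = - f v u" and "distinct \<alpha>" "even (length \<xi>)"
  shows "arrangement_sign \<alpha> (\<xi> @ v # u # \<eta>) * pair_prod f (\<xi> @ v # u # \<eta>)
       = (arrangement_sign \<alpha> (\<xi> @ u # v # \<eta>) :: 'r) * pair_prod f (\<xi> @ u # v # \<eta>)"
  using alternatingD[OF alternating_arrangement_sign[where 'r='r, OF assms(2)], of \<xi> v u \<eta>] antisym[of v u] assms(3)
  by (simp add: pair_prod_append)

lemma signed_pair_prod_swap_pairs:
  fixes f :: "'a \<Rightarrow> 'a \<Rightarrow> 'r::comm_ring_1"
  assumes "distinct \<alpha>" "even (length \<xi>)"
  shows "arrangement_sign \<alpha> (\<xi> @ c # d # a # b # \<eta>) * pair_prod f (\<xi> @ c # d # a # b # \<eta>)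
       = (arrangement_sign \<alpha> (\<xi> @ a # b # c # d # \<eta>) :: 'r) * pair_prod f (\<xi> @ a # b # c # d # \<eta>)"
proof -
  have alt: "alternating (arrangement_sign \<alpha> :: 'a list \<Rightarrow> 'r)"
    by (rule alternating_arrangement_sign[OF assms(1)])
  have "arrangement_sign \<alpha> (\<xi> @ a # b # c # d # \<eta>) = (arrangement_sign \<alpha> (\<xi> @ c # d # a # b # \<eta>) :: 'r)"
    using alternatingD[OF alt, of "\<xi> @ [c]" d a "b # \<eta>"] alternatingD[OF alt, of \<xi> c a "d # b # \<eta>"]
      alternatingD[OF alt, of "\<xi> @ [a, c]" d b \<eta>] alternatingD[OF alt, of "\<xi> @ [a]" c b "d # \<eta>"]
    by simp
  moreover have "pair_prod f (\<xi> @ c # d # a # b # \<eta>) = pair_prod f (\<xi> @ a # b # c # d # \<eta>)"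
    using assms(2) by (simp add: pair_prod_append mult_ac)
  ultimately show ?thesis by simp
qed

lemma pf_term_eq:
  fixes f :: "'a \<Rightarrow> 'a \<Rightarrow> 'r::comm_ring_1"
  assumes antisym: "\<And>u v. f u v = - f v u" and "distinct \<alpha>"
    and "M \<in> pair_partitions (set \<alpha>)" and "lists_pairing M ys"
  shows "pf_term f \<alpha> M = arrangement_sign \<alpha> ys * pair_prod f ys"
proof -
  define zs where "zs = (SOME ys. lists_pairing M ys)"
  have "lists_pairing M zs" unfolding zs_def using assms(4) by (rule someI)
  then have zs: "distinct zs" "even (length zs)" "M = pairs_of zs" by (simp_all add: lists_pairing_iff)
  have ys: "distinct ys" "even (length ys)" "M = pairs_of ys" using assms(4) by (simp_all add: lists_pairing_iff)
  have "set zs = set \<alpha>"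
    using Union_pairs_of[OF zs(2)] zs(3) assms(3) unfolding pair_partitions_def by simp
  then have "pf_term f \<alpha> M = arrangement_sign \<alpha> zs * pair_prod f zs"
    unfolding pf_term_def zs_def[symmetric] Let_def prod_pairs_eq_pair_prod[OF zs(2)]
    using zs(1) by (simp add: arrangement_sign_def)
  moreover have "arrangement_sign \<alpha> ([] @ zs) * pair_prod f ([] @ zs) = arrangement_sign \<alpha> ([] @ ys) * pair_prod f ([] @ ys)"
    by (rule eq_if_pairs_of_eq[where \<Phi>="\<lambda>zs. arrangement_sign \<alpha> zs * pair_prod f zs",
          OF signed_pair_prod_flip[where f=f, OF antisym assms(2)] signed_pair_prod_swap_pairs[OF assms(2)]])
      (use zs ys in auto)
  ultimately show ?thesis by simp
qed

lemma pf_term_insert_pair: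
  fixes f :: "'a \<Rightarrow> 'a \<Rightarrow> 'r::comm_ring_1"
  assumes antisym: "\<And>u v. f u v = - f v u" and d: "distinct (a # \<gamma>)" and y: "y \<in> set \<gamma>"
    and M: "M \<in> pair_partitions (set \<gamma> - {y})"
  shows "pf_term f (a # \<gamma>) (insert {a, y} M) = (-1) ^ pos \<gamma> y * f a y * pf_term f (remove1 y \<gamma>) M"
proof -
  let ?\<gamma>' = "remove1 y \<gamma>"
  have d': "distinct ?\<gamma>'" and set': "set ?\<gamma>' = set \<gamma> - {y}" using d by (simp_all add: set_remove1_eq)
  have "finite M" using M by (intro finite_subset[of M "Pow (set \<gamma>)"]) (auto simp: pair_partitions_def)
  moreover have "\<forall>P\<in>M. card P = 2" "\<forall>P\<in>M. \<forall>Q\<in>M. P \<noteq> Q \<longrightarrow> P \<inter> Q = {}"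
    using M unfolding pair_partitions_def by auto
  ultimately obtain ys where ys: "distinct ys" "even (length ys)" "pairs_of ys = M"
    using exists_list_pairs_of by blast
  have "set ys = set ?\<gamma>'"
    using Union_pairs_of[OF ys(2)] ys(3) M set' unfolding pair_partitions_def by simp
  then have mset: "mset ys = mset ?\<gamma>'" using ys(1) d' by (simp add: set_eq_iff_mset_eq_distinct)
  have "pf_term f (a # \<gamma>) (insert {a, y} M) = arrangement_sign (a # \<gamma>) (a # y # ys) * pair_prod f (a # y # ys)"
    using d y ys \<open>set ys = set ?\<gamma>'\<close> set' insert_pair_in_pair_partitions[of a "set \<gamma>" y M] M
    by (intro pf_term_eq[where f=f, OF antisym d]) (auto simp: lists_pairing_iff)
  moreover have "pf_term f ?\<gamma>' M = arrangement_sign ?\<gamma>' ys * pair_prod f ys"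
    using M ys set' by (intro pf_term_eq[where f=f, OF antisym d']) (auto simp: lists_pairing_iff)
  moreover have "arrangement_sign (a # \<gamma>) ([a, y] @ ys) * (arrangement_sign ?\<gamma>' ([] @ ?\<gamma>') :: 'r)
      = arrangement_sign (a # \<gamma>) ([a, y] @ ?\<gamma>') * arrangement_sign ?\<gamma>' ([] @ ys)"
    by (rule alternating_reorder_cross[OF alternating_arrangement_sign[OF d] alternating_arrangement_sign[OF d'] mset])
  moreover have "arrangement_sign (a # \<gamma>) ([a] @ y # ?\<gamma>') = (-1) ^ pos \<gamma> y * (arrangement_sign (a # \<gamma>) ([a] @ \<gamma>) :: 'r)"
    by (rule alternating_move_to_front[OF alternating_arrangement_sign[OF d] y])
  ultimately show ?thesis
    using arrangement_sign_self[OF d, where 'r='r] arrangement_sign_self[OF d', where 'r='r] by (simp add: mult_ac)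
qed

lemma pf_Nil: "pf (f :: 'a \<Rightarrow> 'a \<Rightarrow> 'r::comm_ring_1) [] = 1"
proof -
  have "pair_partitions ({} :: 'a set) = {{}}" unfolding pair_partitions_def by auto
  moreover have "(SOME ys. lists_pairing {} ys) = ([] :: 'a list)"
    by (rule some_equality) (auto simp: lists_pairing_iff intro: pairs_of_empty_iff[THEN iffD1, OF _ sym])
  moreover have "word_sign ([] :: 'a list) [] = (1 :: 'r)"
    using arrangement_sign_self[of "[] :: 'a list", where 'r='r] by (simp add: arrangement_sign_def)
  ultimately show ?thesis by (simp add: pf_def Let_def)
qed

lemma pf_Cons:
  fixes f :: "'a \<Rightarrow> 'a \<Rightarrow> 'r::comm_ring_1"
  assumes antisym: "\<And>u v. f u v = - f v u" and d: "distinct (a # \<gamma>)" and od: "odd (length \<gamma>)"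
  shows "pf f (a # \<gamma>) = (\<Sum>y\<in>set \<gamma>. (-1) ^ pos \<gamma> y * f a y * pf f (remove1 y \<gamma>))"
proof -
  have a: "a \<notin> set \<gamma>" using d by simp
  have "pf f (a # \<gamma>) = (\<Sum>M\<in>pair_partitions (insert a (set \<gamma>)). pf_term f (a # \<gamma>) M)"
    using pf_eq_sum_pf_term[OF d] od by simp
  also have "\<dots> = (\<Sum>(y, M)\<in>(SIGMA y:set \<gamma>. pair_partitions (set \<gamma> - {y})). pf_term f (a # \<gamma>) (insert {a, y} M))"
    by (subst sum.reindex_bij_betw[OF bij_betw_insert_pair[OF a], symmetric]) (simp add: case_prod_beta)
  also have "\<dots> = (\<Sum>y\<in>set \<gamma>. \<Sum>M\<in>pair_partitions (set \<gamma> - {y}). pf_term f (a # \<gamma>) (insert {a, y} M))"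
    by (rule sum.Sigma[symmetric]) (auto intro: finite_pair_partitions)
  also have "\<dots> = (\<Sum>y\<in>set \<gamma>. (-1) ^ pos \<gamma> y * f a y * pf f (remove1 y \<gamma>))"
  proof (intro sum.cong refl)
    fix y assume y: "y \<in> set \<gamma>"
    have "even (length (remove1 y \<gamma>))" using od y by (simp add: length_remove1)
    then have "pf f (remove1 y \<gamma>) = (\<Sum>M\<in>pair_partitions (set \<gamma> - {y}). pf_term f (remove1 y \<gamma>) M)"
      using d pf_eq_sum_pf_term[of "remove1 y \<gamma>" f] by (simp add: set_remove1_eq)
    then show "(\<Sum>M\<in>pair_partitions (set \<gamma> - {y}). pf_term f (a # \<gamma>) (insert {a, y} M)) =
        (-1) ^ pos \<gamma> y * f a y * pf f (remove1 y \<gamma>)"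
      using pf_term_insert_pair[where f=f, OF antisym d y] by (simp add: sum_distrib_left)
  qed
  finally show ?thesis .
qed

lemma pf_eq_pf_row:
  fixes f :: "'a \<Rightarrow> 'a \<Rightarrow> 'r::comm_ring_1"
  assumes antisym: "\<And>u v. f u v = - f v u"
  shows "distinct \<alpha> \<Longrightarrow> even (length \<alpha>) \<Longrightarrow> pf f \<alpha> = pf_row f \<alpha>"
proof (induction "length \<alpha>" arbitrary: \<alpha> rule: less_induct)
  case less
  show ?case
  proof (cases \<alpha>)
    case Nil
    then show ?thesis by (simp add: pf_Nil)
  next
    case (Cons a \<gamma>)
    have "pf f (remove1 y \<gamma>) = pf_row f (remove1 y \<gamma>)" if "y \<in> set \<gamma>" for y
      using that less.prems Cons by (intro less.hyps) (auto simp: length_remove1)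
    then show ?thesis
      using pf_Cons[where f=f, OF antisym] less.prems Cons by (simp add: pf_row.simps(2))
  qed
qed

lemma overlap_sum_eq_pf_row_sum:
  fixes f :: "'a \<Rightarrow> 'a \<Rightarrow> 'r::comm_ring_1"
  assumes antisym: "\<And>u v. f u v = - f v u"
    and dist: "distinct (\<alpha> @ \<beta>)" and ev_a: "even (length \<alpha>)" and ev_b: "even (length \<beta>)"
    and x_in: "x \<in> set \<beta>"
  shows "(\<Sum>y\<in>set \<beta>. word_sign \<beta> [x, y] * pf f (\<alpha> @ [x, y]) * pf f (del_letters (\<alpha> @ \<beta>) [x, y])) =
    (\<Sum>y\<in>set (remove1 x \<beta>). (-1) ^ (pos \<beta> x + pos (remove1 x \<beta>) y) *
      pf_row f (\<alpha> @ [x, y]) * pf_row f (\<alpha> @ remove1 y (remove1 x \<beta>)))"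
proof -
  let ?\<beta>' = "remove1 x \<beta>"
  have db: "distinct \<beta>" and x\<alpha>: "x \<notin> set \<alpha>" using dist x_in by auto
  have "set \<beta> = insert x (set ?\<beta>')" "x \<notin> set ?\<beta>'" using db x_in by (auto simp: set_remove1_eq)
  moreover have "word_sign \<beta> [x, x] = (0::'r)" by (simp add: word_sign_def)
  ultimately have "(\<Sum>y\<in>set \<beta>. word_sign \<beta> [x, y] * pf f (\<alpha> @ [x, y]) * pf f (del_letters (\<alpha> @ \<beta>) [x, y])) =
      (\<Sum>y\<in>set ?\<beta>'. word_sign \<beta> [x, y] * pf f (\<alpha> @ [x, y]) * pf f (del_letters (\<alpha> @ \<beta>) [x, y]))"
    by simp
  also have "\<dots> = (\<Sum>y\<in>set ?\<beta>'. (-1) ^ (pos \<beta> x + pos ?\<beta>' y) *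
      pf_row f (\<alpha> @ [x, y]) * pf_row f (\<alpha> @ remove1 y ?\<beta>'))"
  proof (intro sum.cong refl)
    fix y assume y: "y \<in> set ?\<beta>'"
    then have "y \<in> set \<beta>" "y \<noteq> x" using db by (auto dest: in_set_remove1)
    then have y\<alpha>: "y \<notin> set \<alpha>" using dist by auto
    have "length (remove1 y ?\<beta>') = length \<beta> - 2" using x_in y by (simp add: length_remove1)
    then have "pf f (\<alpha> @ remove1 y ?\<beta>') = pf_row f (\<alpha> @ remove1 y ?\<beta>')"
      using dist ev_a ev_b by (intro pf_eq_pf_row[where f=f, OF antisym])
        (auto simp: distinct_remove1 dest: in_set_remove1)
    moreover have "pf f (\<alpha> @ [x, y]) = pf_row f (\<alpha> @ [x, y])"
      using dist ev_a x\<alpha> y\<alpha> \<open>y \<noteq> x\<close> by (intro pf_eq_pf_row[where f=f, OF antisym]) auto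
    ultimately show "word_sign \<beta> [x, y] * pf f (\<alpha> @ [x, y]) * pf f (del_letters (\<alpha> @ \<beta>) [x, y]) =
        (-1) ^ (pos \<beta> x + pos ?\<beta>' y) * pf_row f (\<alpha> @ [x, y]) * pf_row f (\<alpha> @ remove1 y ?\<beta>')"
      by (simp add: word_sign_pair[OF db x_in y] del_letters_pair[OF x\<alpha> y\<alpha> db])
  qed
  finally show ?thesis .
qed

theorem mainTheorem1:
  fixes f :: "'a \<Rightarrow> 'a \<Rightarrow> 'r::comm_ring_1"
    and \<alpha> \<beta> :: "'a list" and x :: 'a
  assumes antisym: "\<And>u v. f u v = - f v u"
    and diag: "\<And>u. f u u = 0"
    and dist: "distinct (\<alpha> @ \<beta>)"
    and ev_a: "even (length \<alpha>)"
    and ev_b: "even (length \<beta>)"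
    and x_in: "x \<in> set \<beta>"
  shows "pf f \<alpha> * pf f (\<alpha> @ \<beta>) =
         (\<Sum>y\<in>set \<beta>. word_sign \<beta> [x, y] * pf f (\<alpha> @ [x, y])
                        * pf f (del_letters (\<alpha> @ \<beta>) [x, y]))"
proof -
  have "pf f \<alpha> * pf f (\<alpha> @ \<beta>) = pf_row f \<alpha> * pf_row f (\<alpha> @ \<beta>)"
    using dist ev_a ev_b by (simp add: pf_eq_pf_row[where f=f, OF antisym])
  also have "\<dots> = (\<Sum>y\<in>set (remove1 x \<beta>). (-1) ^ (pos \<beta> x + pos (remove1 x \<beta>) y) *
      pf_row f (\<alpha> @ [x, y]) * pf_row f (\<alpha> @ remove1 y (remove1 x \<beta>)))"
    by (rule pf_row_overlap_identity[where f=f, OF antisym dist ev_a x_in])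
  also have "\<dots> = (\<Sum>y\<in>set \<beta>. word_sign \<beta> [x, y] * pf f (\<alpha> @ [x, y]) * pf f (del_letters (\<alpha> @ \<beta>) [x, y]))"
    by (rule overlap_sum_eq_pf_row_sum[where f=f, OF antisym dist ev_a ev_b x_in, symmetric])
  finally show ?thesis .
qed

end
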